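(* Let $m\ge1$, let $\lambda_1\ge0$ and $\lambda_2\ge0$, and let $f_1,\dots,f_m$ be real numbers ordered so that $|f_1|\le|f_2|\le\cdots\le|f_m|$. Then there exist real numbers $\xi_{i0}\in[-\lambda_1,\lambda_1]$ for $i=1,\dots,m$ and real numbers $\xi_{ij}\in[-\lambda_2,\lambda_2]$ for $i\ne j\in\{1,\dots,m\}$, satisfying $|\xi_{ij}|+|\xi_{ji}|\le\lambda_2$ for all $i\neq j$, such that $$f_i+\xi_{i0}+\sum_{j\in\{1,\dots,m\}\setminus\{i\}}\xi_{ij}=0,\qquad i=1,\dots,m,$$ if and only if $$\sum_{j=k+1}^{m}|f_j|\le\lambda_1(m-k)+\lambda_2\frac{(m-k)(m+k-1)}{2}\quad\text{for }k=0,\dots,m-1.$$ *)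

theory Defs
  imports Complex_Main
begin

end

(*
  Necessity: summing the balance equations over the indices k+1..m, every xi i 0 contributes
  at most lambda1, every pair {i, j} with only i in the tail at most lambda2, and every pair
  inside the tail at most lambda2 in total.

  Sufficiency: after dropping signs (at the end each row is rescaled by f i over its total
  supply), induct on m with own budget c and pair budget lam.  The largest demand a m uses
  its own budget and takes the excess w = max 0 (a m - c) from its pair budgets by water
  filling, q j = min lam (max 0 (t - a j)) with the level t chosen so that the q j add up to
  w.  The other indices then face the still sorted demands a j + q j with own budget c + lam,
  their share of the pair budget with m being added to it.  The tail bound is concave in k,
  and where the water filling is active the new demands all equal t; this lets the tail
  conditions pass to the smaller instance.
*)
theory Submission
  imports Defs
begin

definition balances ::
    "nat \<Rightarrow> real \<Rightarrow> real \<Rightarrow> (nat \<Rightarrow> real) \<Rightarrow> (nat \<Rightarrow> real) \<Rightarrow> (nat \<Rightarrow> nat \<Rightarrow> real) \<Rightarrow> bool" where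
  "balances m lambda1 lambda2 f xi0 xi \<longleftrightarrow>
     (\<forall>i\<in>{1..m}. \<bar>xi0 i\<bar> \<le> lambda1) \<and>
     (\<forall>i\<in>{1..m}. \<forall>j\<in>{1..m}. i \<noteq> j \<longrightarrow>
        \<bar>xi i j\<bar> \<le> lambda2 \<and> \<bar>xi i j\<bar> + \<bar>xi j i\<bar> \<le> lambda2) \<and>
     (\<forall>i\<in>{1..m}. f i + xi0 i + (\<Sum>j\<in>{1..m} - {i}. xi i j) = 0)"

(* Sign-free relaxation: demand a i is met by an own supply s i \<le> c and by shares p i j of
   the budget lam of each pair {i, j}. *)
definition supplies ::
    "nat \<Rightarrow> real \<Rightarrow> real \<Rightarrow> (nat \<Rightarrow> real) \<Rightarrow> (nat \<Rightarrow> nat \<Rightarrow> real) \<Rightarrow> (nat \<Rightarrow> real) \<Rightarrow> bool" where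
  "supplies m c lam s p a \<longleftrightarrow>
     (\<forall>i\<in>{1..m}. 0 \<le> s i \<and> s i \<le> c) \<and>
     (\<forall>i\<in>{1..m}. \<forall>j\<in>{1..m}. 0 \<le> p i j) \<and>
     (\<forall>i\<in>{1..m}. \<forall>j\<in>{1..m}. i \<noteq> j \<longrightarrow> p i j + p j i \<le> lam) \<and>
     (\<forall>i\<in>{1..m}. a i \<le> s i + (\<Sum>j\<in>{1..m} - {i}. p i j))"

(* c for each of the m - k tail indices, plus lam for each of the k (m - k) pairs leaving the
   tail and each of the (m - k) (m - k - 1) / 2 pairs inside it *)
definition tail_capacity :: "real \<Rightarrow> real \<Rightarrow> nat \<Rightarrow> nat \<Rightarrow> real" where
  "tail_capacity c lam m k =
     c * (real m - real k) + lam * ((real m - real k) * (real m + real k - 1) / 2)"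

lemma sum_off_diagonal_le:
  fixes g :: "'a \<Rightarrow> 'a \<Rightarrow> real"
  assumes "finite T" "\<And>i j. i \<in> T \<Longrightarrow> j \<in> T \<Longrightarrow> i \<noteq> j \<Longrightarrow> g i j + g j i \<le> L"
  shows "(\<Sum>i\<in>T. \<Sum>j\<in>T - {i}. g i j) \<le> L * (real (card T) * (real (card T) - 1) / 2)"
  using assms
proof (induction T rule: finite_induct)
  case empty
  then show ?case by simp
next
  case (insert x T)
  have split_row: "(\<Sum>j\<in>insert x T - {i}. g i j) = g i x + (\<Sum>j\<in>T - {i}. g i j)" if "i \<in> T" for i
  proof -
    have "insert x T - {i} = insert x (T - {i})" "x \<notin> T - {i}"
      using that insert.hyps by auto
    then show ?thesis using insert.hyps by simp
  qed
  have "(\<Sum>i\<in>insert x T. \<Sum>j\<in>insert x T - {i}. g i j)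
      = (\<Sum>j\<in>T. g x j + g j x) + (\<Sum>i\<in>T. \<Sum>j\<in>T - {i}. g i j)"
    using insert.hyps split_row by (simp add: insert_Diff_if sum.distrib)
  also have "(\<Sum>j\<in>T. g x j + g j x) \<le> (\<Sum>j\<in>T. L)"
    using insert.prems insert.hyps by (intro sum_mono) auto
  also have "(\<Sum>i\<in>T. \<Sum>j\<in>T - {i}. g i j) \<le> L * (real (card T) * (real (card T) - 1) / 2)"
    using insert by auto
  finally have "(\<Sum>i\<in>insert x T. \<Sum>j\<in>insert x T - {i}. g i j)
      \<le> L * real (card T) + L * (real (card T) * (real (card T) - 1) / 2)"
    by (simp add: mult.commute)
  moreover have "L * real (card T) + L * (real (card T) * (real (card T) - 1) / 2)
      = L * (real (card (insert x T)) * (real (card (insert x T)) - 1) / 2)"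
    using insert.hyps by (simp add: field_simps)
  ultimately show ?case by simp
qed

lemma balances_sum_abs_le:
  assumes bal: "balances m lambda1 lambda2 f xi0 xi" and T: "T \<subseteq> {1..m}"
  shows "(\<Sum>i\<in>T. \<bar>f i\<bar>) \<le> lambda1 * real (card T)
           + lambda2 * (real (card T) * (real m - real (card T)) + real (card T) * (real (card T) - 1) / 2)"
proof -
  have xi0: "\<forall>i\<in>{1..m}. \<bar>xi0 i\<bar> \<le> lambda1"
    and xi: "\<forall>i\<in>{1..m}. \<forall>j\<in>{1..m}. i \<noteq> j \<longrightarrow> \<bar>xi i j\<bar> \<le> lambda2 \<and> \<bar>xi i j\<bar> + \<bar>xi j i\<bar> \<le> lambda2"
    and eq: "\<forall>i\<in>{1..m}. f i + xi0 i + (\<Sum>j\<in>{1..m} - {i}. xi i j) = 0"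
    using bal unfolding balances_def by blast+
  define R where "R = {1..m} - T"
  have fin: "finite T" using T finite_subset by blast
  have "card T \<le> m"
    using card_mono[OF _ T] by simp
  then have card_R: "real (card R) = real m - real (card T)"
    using T by (simp add: R_def card_Diff_subset fin of_nat_diff)
  have row: "\<bar>f i\<bar> \<le> lambda1 + (\<Sum>j\<in>R. \<bar>xi i j\<bar>) + (\<Sum>j\<in>T - {i}. \<bar>xi i j\<bar>)" if i: "i \<in> T" for i
  proof -
    have im: "i \<in> {1..m}" using i T by auto
    have "\<bar>f i\<bar> = \<bar>xi0 i + (\<Sum>j\<in>{1..m} - {i}. xi i j)\<bar>"
      using eq im by (metis abs_minus_cancel add.assoc add_eq_0_iff)
    also have "\<dots> \<le> lambda1 + (\<Sum>j\<in>{1..m} - {i}. \<bar>xi i j\<bar>)"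
      using xi0 im by (intro order.trans[OF abs_triangle_ineq] add_mono) auto
    also have "{1..m} - {i} = R \<union> (T - {i})"
      using i T by (auto simp: R_def)
    also have "(\<Sum>j\<in>R \<union> (T - {i}). \<bar>xi i j\<bar>) = (\<Sum>j\<in>R. \<bar>xi i j\<bar>) + (\<Sum>j\<in>T - {i}. \<bar>xi i j\<bar>)"
      using fin by (intro sum.union_disjoint) (auto simp: R_def)
    finally show ?thesis by linarith
  qed
  have "(\<Sum>i\<in>T. \<bar>f i\<bar>)
      \<le> (\<Sum>i\<in>T. lambda1 + (\<Sum>j\<in>R. \<bar>xi i j\<bar>) + (\<Sum>j\<in>T - {i}. \<bar>xi i j\<bar>))"
    using row by (rule sum_mono)
  also have "\<dots> = real (card T) * lambda1 + (\<Sum>i\<in>T. \<Sum>j\<in>R. \<bar>xi i j\<bar>) + (\<Sum>i\<in>T. \<Sum>j\<in>T - {i}. \<bar>xi i j\<bar>)"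
    by (simp add: sum.distrib)
  also have "(\<Sum>i\<in>T. \<Sum>j\<in>R. \<bar>xi i j\<bar>) \<le> (\<Sum>i\<in>T. \<Sum>j\<in>R. lambda2)"
  proof (intro sum_mono)
    fix i j assume "i \<in> T" "j \<in> R"
    then show "\<bar>xi i j\<bar> \<le> lambda2"
      using xi T unfolding R_def by (metis DiffE subsetD)
  qed
  also have "(\<Sum>i\<in>T. \<Sum>j\<in>T - {i}. \<bar>xi i j\<bar>) \<le> lambda2 * (real (card T) * (real (card T) - 1) / 2)"
    using xi T fin by (intro sum_off_diagonal_le) auto
  finally show ?thesis
    using card_R by (simp add: algebra_simps)
qed

lemma balances_tail_sum_le:
  assumes "balances m lambda1 lambda2 f xi0 xi" "k \<le> m"
  shows "(\<Sum>j\<in>{k+1..m}. \<bar>f j\<bar>) \<le> tail_capacity lambda1 lambda2 m k"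
proof -
  have "(\<Sum>j\<in>{k+1..m}. \<bar>f j\<bar>) \<le> lambda1 * real (card {k+1..m})
      + lambda2 * (real (card {k+1..m}) * (real m - real (card {k+1..m}))
                   + real (card {k+1..m}) * (real (card {k+1..m}) - 1) / 2)"
    using assms(1) by (rule balances_sum_abs_le) auto
  then show ?thesis
    using assms(2) by (simp add: tail_capacity_def of_nat_diff field_simps)
qed

lemma balances_of_supplies:
  assumes "supplies m lambda1 lambda2 s p (\<lambda>i. \<bar>f i\<bar>)"
  shows "\<exists>xi0 xi. balances m lambda1 lambda2 f xi0 xi"
proof -
  have s: "\<forall>i\<in>{1..m}. 0 \<le> s i \<and> s i \<le> lambda1"
    and p: "\<forall>i\<in>{1..m}. \<forall>j\<in>{1..m}. 0 \<le> p i j"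
    and p_pair: "\<forall>i\<in>{1..m}. \<forall>j\<in>{1..m}. i \<noteq> j \<longrightarrow> p i j + p j i \<le> lambda2"
    and cover: "\<forall>i\<in>{1..m}. \<bar>f i\<bar> \<le> s i + (\<Sum>j\<in>{1..m} - {i}. p i j)"
    using assms unfolding supplies_def by blast+
  define D where "D i = s i + (\<Sum>j\<in>{1..m} - {i}. p i j)" for i
  \<comment> \<open>D i = 0 forces f i = 0, so the junk value f i / 0 = 0 does no harm.\<close>
  define \<rho> where "\<rho> i = f i / D i" for i
  have \<rho>: "\<bar>\<rho> i\<bar> \<le> 1" "\<rho> i * D i = f i" if "i \<in> {1..m}" for i
  proof -
    have "\<bar>f i\<bar> \<le> D i"
      using cover that by (simp add: D_def)
    then show "\<bar>\<rho> i\<bar> \<le> 1" "\<rho> i * D i = f i"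
      by (auto simp: \<rho>_def abs_divide divide_le_eq_1)
  qed
  have scaled: "\<bar>- (\<rho> i * x)\<bar> \<le> x" if "i \<in> {1..m}" "0 \<le> x" for i x
    using \<rho>(1)[OF that(1)] that(2) by (simp add: abs_mult mult_left_le_one_le)
  have "balances m lambda1 lambda2 f (\<lambda>i. - (\<rho> i * s i)) (\<lambda>i j. - (\<rho> i * p i j))"
    unfolding balances_def
  proof (intro conjI ballI impI)
    fix i assume i: "i \<in> {1..m}"
    show "\<bar>- (\<rho> i * s i)\<bar> \<le> lambda1"
      using scaled[OF i, of "s i"] s i by fastforce
    have "f i + - (\<rho> i * s i) + (\<Sum>j\<in>{1..m} - {i}. - (\<rho> i * p i j)) = f i - \<rho> i * D i"
      by (simp add: D_def sum_negf sum_distrib_left algebra_simps)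
    then show "f i + - (\<rho> i * s i) + (\<Sum>j\<in>{1..m} - {i}. - (\<rho> i * p i j)) = 0"
      using \<rho>(2)[OF i] by simp
  next
    fix i j assume i: "i \<in> {1..m}" and j: "j \<in> {1..m}" and "i \<noteq> j"
    then have "p i j + p j i \<le> lambda2" "0 \<le> p i j" "0 \<le> p j i"
      using p p_pair by auto
    with scaled[OF i, of "p i j"] scaled[OF j, of "p j i"]
    show "\<bar>- (\<rho> i * p i j)\<bar> \<le> lambda2"
      and "\<bar>- (\<rho> i * p i j)\<bar> + \<bar>- (\<rho> j * p j i)\<bar> \<le> lambda2"
      by linarith+
  qed
  then show ?thesis by blast
qed

lemma le_min_supply_shift:
  fixes a q s' P c lam :: real
  assumes "a + q \<le> s' + P" "s' \<le> c + lam" "0 \<le> q" "q \<le> lam"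
  shows "a \<le> min s' c + min (s' - min s' c) (lam - q) + P"
  using assms by (auto simp: min_def)

lemma supplies_extend:
  assumes sup: "supplies m (c + lam) lam s' p' (\<lambda>j. a j + q j)"
    and c: "0 \<le> c" and q: "\<And>j. 0 \<le> q j \<and> q j \<le> lam"
    and last: "a (Suc m) \<le> c + (\<Sum>j\<in>{1..m}. q j)"
  shows "\<exists>s p. supplies (Suc m) c lam s p a"
proof -
  have s': "\<forall>i\<in>{1..m}. 0 \<le> s' i \<and> s' i \<le> c + lam"
    and p': "\<forall>i\<in>{1..m}. \<forall>j\<in>{1..m}. 0 \<le> p' i j"
    and p'_pair: "\<forall>i\<in>{1..m}. \<forall>j\<in>{1..m}. i \<noteq> j \<longrightarrow> p' i j + p' j i \<le> lam"
    and cover': "\<forall>i\<in>{1..m}. a i + q i \<le> s' i + (\<Sum>j\<in>{1..m} - {i}. p' i j)"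
    using sup unfolding supplies_def by blast+
  \<comment> \<open>The new index draws q j from its pair budget with j; the part of s' j above c is
      moved onto what remains of that budget, lam - q j.\<close>
  define s where "s i = (if i = Suc m then c else min (s' i) c)" for i
  define r where "r i = min (s' i - min (s' i) c) (lam - q i)" for i
  define p where "p i j = (if i = Suc m then q j else if j = Suc m then r i else p' i j)" for i j
  have "supplies (Suc m) c lam s p a"
    unfolding supplies_def
  proof (intro conjI ballI impI)
    fix i assume i: "i \<in> {1..Suc m}"
    show "0 \<le> s i" "s i \<le> c"
      using i s' c by (auto simp: s_def le_Suc_eq)
  next
    fix i j assume "i \<in> {1..Suc m}" "j \<in> {1..Suc m}"
    then show "0 \<le> p i j"
      using p' q s' by (auto simp: p_def r_def le_Suc_eq)
  next
    fix i j assume "i \<in> {1..Suc m}" "j \<in> {1..Suc m}" "i \<noteq> j"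
    then show "p i j + p j i \<le> lam"
      using p'_pair by (auto simp: p_def r_def le_Suc_eq)
  next
    fix i assume i: "i \<in> {1..Suc m}"
    show "a i \<le> s i + (\<Sum>j\<in>{1..Suc m} - {i}. p i j)"
    proof (cases "i = Suc m")
      case True
      then have "{1..Suc m} - {i} = {1..m}" by auto
      with True show ?thesis
        using last by (simp add: s_def p_def)
    next
      case False
      with i have im: "i \<in> {1..m}" by auto
      have "{1..Suc m} - {i} = insert (Suc m) ({1..m} - {i})"
        using False i by auto
      then have "(\<Sum>j\<in>{1..Suc m} - {i}. p i j) = r i + (\<Sum>j\<in>{1..m} - {i}. p' i j)"
        using False by (simp add: p_def)
      moreover have "a i + q i \<le> s' i + (\<Sum>j\<in>{1..m} - {i}. p' i j)" "s' i \<le> c + lam"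
        using cover' s' im by auto
      ultimately show ?thesis
        using False le_min_supply_shift q[of i] by (simp add: s_def r_def add.assoc)
    qed
  qed
  then show ?thesis by blast
qed

lemma tail_capacity_self [simp]: "tail_capacity c lam m m = 0"
  by (simp add: tail_capacity_def)

lemma tail_capacity_Suc_Suc:
  "tail_capacity c lam (Suc m) (Suc k) = tail_capacity (c + lam) lam m k"
  by (simp add: tail_capacity_def field_simps)

lemma tail_capacity_Suc:
  "tail_capacity c lam (Suc m) k = tail_capacity (c + lam) lam m k + lam * real k + c"
  by (simp add: tail_capacity_def field_simps)

lemma tail_capacity_above_chord:
  fixes S t :: real
  assumes "v < k" "k \<le> u" "0 \<le> lam"
    and "S \<le> tail_capacity c lam m u"
    and "S + (real u - real v) * t \<le> tail_capacity c lam m v"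
  shows "S + (real u - real k) * t \<le> tail_capacity c lam m k"
proof -
  define N where "N = tail_capacity c lam m"
  have vk: "real v < real k" and ku: "real k \<le> real u"
    using assms(1,2) by auto
  have "(real k - real v) * (S - N u) \<le> 0"
    using assms(4) vk by (intro mult_nonneg_nonpos) (auto simp: N_def)
  moreover have "(real u - real k) * (S + (real u - real v) * t - N v) \<le> 0"
    using assms(5) ku by (intro mult_nonneg_nonpos) (auto simp: N_def)
  moreover have "(real k - real v) * N u + (real u - real k) * N v
      = (real u - real v) * N k - lam / 2 * ((real u - real v) * (real u - real k) * (real k - real v))"
    unfolding N_def tail_capacity_def by (simp add: field_simps)
  moreover have "0 \<le> lam / 2 * ((real u - real v) * (real u - real k) * (real k - real v))"
    using vk ku assms(3) by (intro mult_nonneg_nonneg) auto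
  ultimately have "(real u - real v) * (S + (real u - real k) * t - N k) \<le> 0"
    by (simp add: algebra_simps)
  then show ?thesis
    using vk ku by (simp add: N_def mult_le_0_iff)
qed

lemma mono_on_threshold:
  fixes b :: "nat \<Rightarrow> 'a::order"
  assumes mono: "mono_on {1..m} b" and up: "\<And>x y. x \<le> y \<Longrightarrow> P x \<Longrightarrow> P y"
  shows "\<exists>u\<le>m. (\<forall>j\<in>{1..u}. \<not> P (b j)) \<and> (\<forall>j\<in>{u<..m}. P (b j))"
proof -
  define F where "F = insert 0 {j \<in> {1..m}. \<not> P (b j)}"
  define u where "u = Max F"
  have u_in: "u \<in> F"
    unfolding u_def by (rule Max_in) (auto simp: F_def)
  have above_u: "j \<le> u" if "j \<in> F" for j
    unfolding u_def using that by (intro Max_ge) (auto simp: F_def)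
  have "u \<le> m" using u_in by (auto simp: F_def)
  moreover have "\<not> P (b j)" if "j \<in> {1..u}" for j
  proof
    assume "P (b j)"
    have "u \<noteq> 0" using that by simp
    with u_in have "u \<le> m" "\<not> P (b u)" by (auto simp: F_def)
    moreover have "P (b u)"
      using up[OF mono_onD[OF mono] \<open>P (b j)\<close>] that \<open>u \<le> m\<close> by auto
    ultimately show False by simp
  qed
  moreover have "P (b j)" if "j \<in> {u<..m}" for j
    using above_u[of j] that by (force simp: F_def)
  ultimately show ?thesis by blast
qed

lemma water_level_exists:
  fixes a :: "nat \<Rightarrow> real"
  assumes "0 \<le> lam" "0 \<le> w" "w \<le> real m * lam"
  shows "\<exists>t. (\<Sum>j\<in>{1..m}. min lam (max 0 (t - a j))) = w"
proof -
  define fill where "fill t = (\<Sum>j\<in>{1..m}. min lam (max 0 (t - a j)))" for t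
  define A where "A = (\<Sum>j\<in>{1..m}. \<bar>a j\<bar>)"
  have a_bound: "\<bar>a j\<bar> \<le> A" if "j \<in> {1..m}" for j
    unfolding A_def using that by (intro member_le_sum) auto
  have "fill (- A) = 0"
    unfolding fill_def using a_bound assms(1) by (intro sum.neutral) force
  moreover have "fill (A + lam) = real m * lam"
  proof -
    have "fill (A + lam) = (\<Sum>j\<in>{1..m}. lam)"
      unfolding fill_def using a_bound assms(1) by (intro sum.cong) force+
    then show ?thesis by simp
  qed
  moreover have "- A \<le> A + lam"
    using assms(1) sum_nonneg[of "{1..m}" "\<lambda>j. \<bar>a j\<bar>"] by (simp add: A_def)
  ultimately have "\<exists>t\<ge>- A. t \<le> A + lam \<and> fill t = w"
    using assms by (intro IVT) (auto simp: fill_def intro!: continuous_intros)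
  then show ?thesis by (auto simp: fill_def)
qed

lemma mono_on_water_filled:
  fixes a :: "nat \<Rightarrow> real"
  assumes "mono_on A a" "0 \<le> lam"
  shows "mono_on A (\<lambda>j. a j + min lam (max 0 (t - a j)))"
proof (rule mono_onI)
  fix i j assume "i \<in> A" "j \<in> A" "i \<le> j"
  then have "a i \<le> a j" using mono_onD[OF assms(1)] by blast
  with assms(2) show "a i + min lam (max 0 (t - a i)) \<le> a j + min lam (max 0 (t - a j))"
    by (auto simp: min_def max_def)
qed

lemma sum_tail_split:
  fixes g :: "nat \<Rightarrow> 'a::comm_monoid_add"
  assumes "x \<le> y" "y \<le> m"
  shows "(\<Sum>j\<in>{x+1..m}. g j) = (\<Sum>j\<in>{x+1..y}. g j) + (\<Sum>j\<in>{y+1..m}. g j)"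
proof -
  have "{x+1..m} = {x+1..y} \<union> {y+1..m}" using assms by auto
  then show ?thesis by (simp add: sum.union_disjoint ivl_disj_int_two)
qed

lemma tail_sum_le_of_full_prefix:
  fixes a q :: "nat \<Rightarrow> real"
  assumes "v \<le> m" "\<forall>j\<in>{1..v}. q j = lam"
    and "(\<Sum>j\<in>{v+1..m}. a j) + (\<Sum>j\<in>{1..m}. q j) \<le> N + lam * real v"
  shows "(\<Sum>j\<in>{v+1..m}. a j + q j) \<le> N"
proof -
  have "(\<Sum>j\<in>{0+1..m}. q j) = (\<Sum>j\<in>{0+1..v}. q j) + (\<Sum>j\<in>{v+1..m}. q j)"
    using assms(1) by (intro sum_tail_split) auto
  moreover have "(\<Sum>j\<in>{1..v}. q j) = real v * lam"
    using assms(2) by simp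
  ultimately show ?thesis
    using assms(3) by (simp add: sum.distrib algebra_simps)
qed

lemma water_filling_zones:
  fixes a :: "nat \<Rightarrow> real" and t lam :: real
  defines "q \<equiv> \<lambda>j. min lam (max 0 (t - a j))"
  assumes lam: "0 \<le> lam" and mono: "mono_on {1..m} a"
  obtains u v where "u \<le> m" "v \<le> m"
    and "\<forall>j\<in>{u<..m}. q j = 0" and "\<forall>j\<in>{1..v}. q j = lam"
    and "\<forall>j. v < j \<longrightarrow> j \<le> u \<longrightarrow> a j + q j = t"
proof -
  obtain u where u: "u \<le> m" "\<forall>j\<in>{1..u}. \<not> t < a j" "\<forall>j\<in>{u<..m}. t < a j"
    using mono_on_threshold[OF mono, of "\<lambda>x. t < x"] by force
  have "mono_on {1..m} (\<lambda>j. a j + q j)"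
    unfolding q_def using mono lam by (rule mono_on_water_filled)
  then obtain v where v: "v \<le> m" "\<forall>j\<in>{1..v}. \<not> t \<le> a j + q j" "\<forall>j\<in>{v<..m}. t \<le> a j + q j"
    using mono_on_threshold[of m _ "\<lambda>x. t \<le> x"] by force
  have "q j = 0" if "j \<in> {u<..m}" for j
    using u(3) that lam by (auto simp: q_def)
  moreover have "q j = lam" if "j \<in> {1..v}" for j
    using v(2) that by (auto simp: q_def min_def max_def split: if_splits)
  moreover have "a j + q j = t" if "v < j" "j \<le> u" for j
  proof -
    have "t \<le> a j + q j" "\<not> t < a j"
      using u v that by auto
    then show ?thesis by (auto simp: q_def not_less)
  qed
  ultimately show ?thesis
    using that u(1) v(1) by blast
qed

lemma water_filling_tail_bound:
  fixes a :: "nat \<Rightarrow> real" and t lam C :: real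
  defines "q \<equiv> \<lambda>j. min lam (max 0 (t - a j))"
  assumes lam: "0 \<le> lam" and mono: "mono_on {1..m} a" and "k \<le> m"
    and tail: "\<And>k. k \<le> m \<Longrightarrow> (\<Sum>j\<in>{k+1..m}. a j) \<le> tail_capacity C lam m k"
    and tail_plus: "\<And>k. k \<le> m \<Longrightarrow>
      (\<Sum>j\<in>{k+1..m}. a j) + (\<Sum>j\<in>{1..m}. q j) \<le> tail_capacity C lam m k + lam * real k"
  shows "(\<Sum>j\<in>{k+1..m}. a j + q j) \<le> tail_capacity C lam m k"
proof -
  obtain u v where u: "u \<le> m" and v: "v \<le> m"
    and q_zero: "\<forall>j\<in>{u<..m}. q j = 0" and q_full: "\<forall>j\<in>{1..v}. q j = lam"
    and level: "\<forall>j. v < j \<longrightarrow> j \<le> u \<longrightarrow> a j + q j = t"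
    using water_filling_zones[OF lam mono] unfolding q_def by blast
  have level_sum: "(\<Sum>j\<in>{x+1..m}. a j + q j) = (\<Sum>j\<in>{u+1..m}. a j) + (real u - real x) * t"
    if "v \<le> x" "x \<le> u" for x
  proof -
    have "(\<Sum>j\<in>{x+1..u}. a j + q j) = (\<Sum>j\<in>{x+1..u}. t)"
      using level that by (intro sum.cong) auto
    moreover have "(\<Sum>j\<in>{u+1..m}. a j + q j) = (\<Sum>j\<in>{u+1..m}. a j)"
      using q_zero by (intro sum.cong) auto
    ultimately show ?thesis
      using sum_tail_split[of x u m "\<lambda>j. a j + q j"] that u by (simp add: of_nat_diff)
  qed
  consider "u \<le> k" | "k \<le> v" | "v < k" "k < u" by linarith
  then show ?thesis
  proof cases
    case 1
    then have "(\<Sum>j\<in>{k+1..m}. a j + q j) = (\<Sum>j\<in>{k+1..m}. a j)"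
      using q_zero by (intro sum.cong) auto
    then show ?thesis using tail \<open>k \<le> m\<close> by simp
  next
    case 2
    then have "\<forall>j\<in>{1..k}. q j = lam"
      using q_full by simp
    then show ?thesis
      using tail_sum_le_of_full_prefix[OF \<open>k \<le> m\<close> _ tail_plus[OF \<open>k \<le> m\<close>]] by blast
  next
    case 3
    have "(\<Sum>j\<in>{u+1..m}. a j) \<le> tail_capacity C lam m u"
      using tail u by blast
    moreover have "(\<Sum>j\<in>{u+1..m}. a j) + (real u - real v) * t \<le> tail_capacity C lam m v"
      using level_sum[of v] tail_sum_le_of_full_prefix[OF v q_full tail_plus[OF v]] 3 by simp
    ultimately show ?thesis
      using tail_capacity_above_chord[OF 3(1) _ lam] level_sum[of k] 3 by simp
  qed
qed

lemma tail_bounds_drop_last: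
  assumes mono: "mono_on {1..Suc m} a"
    and tail: "\<And>k. k \<le> Suc m \<Longrightarrow> (\<Sum>j\<in>{k+1..Suc m}. a j) \<le> tail_capacity c lam (Suc m) k"
    and "k \<le> m"
  shows "(\<Sum>j\<in>{k+1..m}. a j) \<le> tail_capacity (c + lam) lam m k"
    and "(\<Sum>j\<in>{k+1..m}. a j) + (a (Suc m) - c) \<le> tail_capacity (c + lam) lam m k + lam * real k"
proof -
  have "(\<Sum>j\<in>{k+1..m}. a j) \<le> (\<Sum>j\<in>{k+1..m}. a (Suc j))"
    using mono_onD[OF mono] by (intro sum_mono) auto
  also have "\<dots> = (\<Sum>j\<in>{Suc k+1..Suc m}. a j)"
    by (simp flip: sum.shift_bounds_cl_Suc_ivl)
  also have "\<dots> \<le> tail_capacity c lam (Suc m) (Suc k)"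
    using tail \<open>k \<le> m\<close> by simp
  finally show "(\<Sum>j\<in>{k+1..m}. a j) \<le> tail_capacity (c + lam) lam m k"
    by (simp add: tail_capacity_Suc_Suc)
  have "(\<Sum>j\<in>{k+1..m}. a j) + a (Suc m) \<le> tail_capacity c lam (Suc m) k"
    using tail[of k] \<open>k \<le> m\<close> by simp
  then show "(\<Sum>j\<in>{k+1..m}. a j) + (a (Suc m) - c) \<le> tail_capacity (c + lam) lam m k + lam * real k"
    by (simp add: tail_capacity_Suc)
qed

lemma supplies_exist:
  assumes "0 \<le> c" "0 \<le> lam" "mono_on {1..m} a"
    and "\<And>k. k \<le> m \<Longrightarrow> (\<Sum>j\<in>{k+1..m}. a j) \<le> tail_capacity c lam m k"
  shows "\<exists>s p. supplies m c lam s p a"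
  using assms
proof (induction m arbitrary: c a)
  case 0
  then show ?case by (simp add: supplies_def)
next
  case (Suc m)
  have c: "0 \<le> c" and lam: "0 \<le> lam" and mono: "mono_on {1..Suc m} a"
    and tail: "\<And>k. k \<le> Suc m \<Longrightarrow> (\<Sum>j\<in>{k+1..Suc m}. a j) \<le> tail_capacity c lam (Suc m) k"
    using Suc.prems by blast+
  define w where "w = max 0 (a (Suc m) - c)"
  have "a (Suc m) \<le> c + real m * lam"
    using tail[of m] by (simp add: tail_capacity_def mult.commute)
  then obtain t where t: "(\<Sum>j\<in>{1..m}. min lam (max 0 (t - a j))) = w"
    using water_level_exists[of lam w m a] lam by (auto simp: w_def)
  define q where "q j = min lam (max 0 (t - a j))" for j
  have mono_m: "mono_on {1..m} a"
    using mono by (rule mono_on_subset) auto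
  have tail_m: "(\<Sum>j\<in>{k+1..m}. a j) \<le> tail_capacity (c + lam) lam m k"
    and tail_plus: "(\<Sum>j\<in>{k+1..m}. a j) + (\<Sum>j\<in>{1..m}. q j) \<le> tail_capacity (c + lam) lam m k + lam * real k"
    if "k \<le> m" for k
  proof -
    have "0 \<le> lam * real k" using lam by simp
    with tail_bounds_drop_last[OF mono tail that] t
    show "(\<Sum>j\<in>{k+1..m}. a j) \<le> tail_capacity (c + lam) lam m k"
      and "(\<Sum>j\<in>{k+1..m}. a j) + (\<Sum>j\<in>{1..m}. q j) \<le> tail_capacity (c + lam) lam m k + lam * real k"
      by (auto simp: q_def w_def max_def)
  qed
  have "\<exists>s' p'. supplies m (c + lam) lam s' p' (\<lambda>j. a j + q j)"
  proof (rule Suc.IH)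
    show "0 \<le> c + lam" "0 \<le> lam" using c lam by simp_all
    show "mono_on {1..m} (\<lambda>j. a j + q j)"
      unfolding q_def using mono_m lam by (rule mono_on_water_filled)
    show "(\<Sum>j\<in>{k+1..m}. a j + q j) \<le> tail_capacity (c + lam) lam m k" if "k \<le> m" for k
      using water_filling_tail_bound[OF lam mono_m that, of "c + lam" t] tail_m tail_plus
      by (simp add: q_def)
  qed
  then obtain s' p' where "supplies m (c + lam) lam s' p' (\<lambda>j. a j + q j)" by blast
  moreover have "0 \<le> q j \<and> q j \<le> lam" for j
    using lam by (simp add: q_def)
  moreover have "a (Suc m) \<le> c + (\<Sum>j\<in>{1..m}. q j)"
    using t by (simp add: q_def w_def)
  ultimately show ?case
    using supplies_extend c by blast
qed

theorem theorem2:
  fixes m :: nat and lambda1 lambda2 :: real and f :: "nat \<Rightarrow> real"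
  assumes "m \<ge> 1" and "lambda1 \<ge> 0" and "lambda2 \<ge> 0"
    and "\<And>i j. 1 \<le> i \<Longrightarrow> i \<le> j \<Longrightarrow> j \<le> m \<Longrightarrow> \<bar>f i\<bar> \<le> \<bar>f j\<bar>"
  shows "(\<exists>xi0 :: nat \<Rightarrow> real. \<exists>xi :: nat \<Rightarrow> nat \<Rightarrow> real.
            (\<forall>i\<in>{1..m}. \<bar>xi0 i\<bar> \<le> lambda1) \<and>
            (\<forall>i\<in>{1..m}. \<forall>j\<in>{1..m}. i \<noteq> j \<longrightarrow>
                 \<bar>xi i j\<bar> \<le> lambda2 \<and> \<bar>xi i j\<bar> + \<bar>xi j i\<bar> \<le> lambda2) \<and>
            (\<forall>i\<in>{1..m}. f i + xi0 i + (\<Sum>j\<in>{1..m} - {i}. xi i j) = 0))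
         \<longleftrightarrow>
         (\<forall>k\<in>{0..m-1}. (\<Sum>j\<in>{k+1..m}. \<bar>f j\<bar>)
            \<le> lambda1 * real (m - k) + lambda2 * (real (m - k) * (real m + real k - 1) / 2))"
  (is "?L \<longleftrightarrow> ?R")
proof -
  let ?tail_bound = "\<lambda>k. (\<Sum>j\<in>{k+1..m}. \<bar>f j\<bar>) \<le> tail_capacity lambda1 lambda2 m k"
  have mono: "mono_on {1..m} (\<lambda>j. \<bar>f j\<bar>)"
    using assms(4) by (intro mono_onI) auto
  have "?L \<longleftrightarrow> (\<exists>xi0 xi. balances m lambda1 lambda2 f xi0 xi)"
    by (simp add: balances_def)
  also have "\<dots> \<longleftrightarrow> (\<forall>k\<le>m. ?tail_bound k)"
  proof
    assume "\<exists>xi0 xi. balances m lambda1 lambda2 f xi0 xi"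
    then show "\<forall>k\<le>m. ?tail_bound k"
      using balances_tail_sum_le by blast
  next
    assume "\<forall>k\<le>m. ?tail_bound k"
    then obtain s p where "supplies m lambda1 lambda2 s p (\<lambda>j. \<bar>f j\<bar>)"
      using supplies_exist[OF assms(2,3) mono] by blast
    then show "\<exists>xi0 xi. balances m lambda1 lambda2 f xi0 xi"
      by (rule balances_of_supplies)
  qed
  also have "\<dots> \<longleftrightarrow> (\<forall>k\<in>{0..m-1}. ?tail_bound k)"
  proof -
    have "k \<le> m \<longleftrightarrow> k \<in> {0..m-1} \<or> k = m" for k
      using assms(1) by auto
    moreover have "?tail_bound m" by simp
    ultimately show ?thesis by blast
  qed
  also have "\<dots> \<longleftrightarrow> ?R"
    by (simp add: tail_capacity_def of_nat_diff)
  finally show ?thesis .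
qed

end
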